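(* Let $\alpha>1$, let $X=\{x_j:j\in J\}\subset\mathbb{R}^2$ be finite with $n=|J|$, and suppose the $1$-centre $C$ of $X$ is equidistant from all points of $X$. Then $s_\alpha^*=C$ if and only if $C\in\mathrm{conv}(\{M_j(C):j\in J\})$.
   Context: $s_\alpha^*$ is the unique minimiser of $P_\alpha(s,X)=\sum_{j\in J}\|s-x_j\|^\alpha+\max_{j\in J}\|s-x_j\|^\alpha$. $C$ is the centre of the minimum enclosing circle of $X$. For a point $s$, $x_j(s)=s+\|s-x_j\|^{\alpha-2}(x_j-s)$ (so $\|x_j(s)-s\|=\|x_j-s\|^{\alpha-1}$), and $M_j(s)=\frac{1}{n+1}\big(x_j(s)+\sum_{i\in J}x_i(s)\big)$. *)

theory Defs
  imports "HOL-Analysis.Analysis"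
begin

text \<open>Points of the plane are vectors of type real^2. The finite point set X is
indexed by its own elements (J = X, so n = card X).\<close>

definition Pfun :: "real \<Rightarrow> (real^2) set \<Rightarrow> real^2 \<Rightarrow> real" where
  "Pfun \<alpha> X s = (\<Sum>x\<in>X. norm (s - x) powr \<alpha>) + Max ((\<lambda>x. norm (s - x) powr \<alpha>) ` X)"

definition s_star :: "real \<Rightarrow> (real^2) set \<Rightarrow> real^2" where
  "s_star \<alpha> X = (THE s. \<forall>t. Pfun \<alpha> X s \<le> Pfun \<alpha> X t)"

definition max_dist :: "(real^2) set \<Rightarrow> real^2 \<Rightarrow> real" where
  "max_dist X s = Max ((\<lambda>x. norm (s - x)) ` X)"

definition one_centre :: "(real^2) set \<Rightarrow> real^2" where
  "one_centre X = (THE c. \<forall>t. max_dist X c \<le> max_dist X t)"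

definition xs_pt :: "real \<Rightarrow> real^2 \<Rightarrow> real^2 \<Rightarrow> real^2" where
  "xs_pt \<alpha> x s = s + (norm (s - x) powr (\<alpha> - 2)) *\<^sub>R (x - s)"

definition M_pt :: "real \<Rightarrow> (real^2) set \<Rightarrow> real^2 \<Rightarrow> real^2 \<Rightarrow> real^2" where
  "M_pt \<alpha> X x s = (1 / (real (card X) + 1)) *\<^sub>R (xs_pt \<alpha> x s + (\<Sum>y\<in>X. xs_pt \<alpha> y s))"

end

theory Submission
  imports Defs
begin

text \<open>Write \<open>P\<^sub>j(s) = \<Sum>\<^sub>x \<parallel>s - x\<parallel>\<^sup>\<alpha> + \<parallel>s - x\<^sub>j\<parallel>\<^sup>\<alpha>\<close>, so that \<open>P\<^sub>\<alpha> = max\<^sub>j P\<^sub>j\<close> with each branch strictly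
convex and differentiable; strict convexity makes the minimiser unique, so \<open>s\<^sub>\<alpha>\<^sup>* = C\<close> just says
that C minimises \<open>P\<^sub>\<alpha>\<close>. At an equidistant point c every branch is active, and
\<open>M\<^sub>j(c) - c = -\<nabla>P\<^sub>j(c) / (\<alpha>(n+1))\<close>. Hence c fails to be a minimiser iff some direction d
decreases every branch at once, i.e. \<open>\<langle>\<nabla>P\<^sub>j(c), d\<rangle> < 0\<close> for all j, and by separation of a
point from the convex hull of a finite set this happens iff \<open>c \<notin> conv {M\<^sub>j(c)}\<close>.\<close>

lemma bernoulli_powr_strict:
  fixes x \<alpha> :: real
  assumes "1 < \<alpha>" "0 \<le> x" "x \<noteq> 1"
  shows "1 + \<alpha> * (x - 1) < x powr \<alpha>"
proof (cases "x = 0")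
  case True
  then show ?thesis using assms by simp
next
  case False
  define g where "g y = y powr \<alpha> - \<alpha> * y" for y :: real
  have g': "(g has_real_derivative \<alpha> * (y powr (\<alpha> - 1) - 1)) (at y)" if "0 < y" for y
    unfolding g_def using that by (auto intro!: derivative_eq_intros simp: algebra_simps)
  have g_cont: "continuous_on {a..b} g" if "0 < a" for a b
    unfolding g_def using that by (auto intro!: continuous_intros)
  have "g 1 < g x"
  proof (cases "x < 1")
    case True
    show ?thesis
    proof (rule DERIV_neg_imp_decreasing_open[OF True])
      fix y assume "x < y" "y < 1"
      then have "y powr (\<alpha> - 1) < 1"
        using assms by (metis powr_less_mono2 powr_one_eq_one diff_gt_0_iff_gt less_trans
            less_eq_real_def False)
      then show "\<exists>d. (g has_real_derivative d) (at y) \<and> d < 0"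
        using g'[of y] \<open>x < y\<close> assms False
        by (intro exI[of _ "\<alpha> * (y powr (\<alpha> - 1) - 1)"]) (auto simp: mult_pos_neg)
    qed (use g_cont assms False in auto)
  next
    case False
    then have "1 < x" using assms by simp
    then show ?thesis
    proof (rule DERIV_pos_imp_increasing_open)
      fix y assume "1 < y" "y < x"
      then have "1 < y powr (\<alpha> - 1)"
        using assms by (metis powr_less_mono2 powr_one_eq_one diff_gt_0_iff_gt zero_le_one)
      then show "\<exists>d. (g has_real_derivative d) (at y) \<and> 0 < d"
        using g'[of y] \<open>1 < y\<close> assms by (intro exI[of _ "\<alpha> * (y powr (\<alpha> - 1) - 1)"]) auto
    qed (use g_cont in auto)
  qed
  then show ?thesis unfolding g_def by (simp add: algebra_simps)
qed

lemma powr_gt_tangent: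
  fixes a b \<alpha> :: real
  assumes "1 < \<alpha>" "0 < a" "0 \<le> b" "b \<noteq> a"
  shows "a powr \<alpha> + \<alpha> * a powr (\<alpha> - 1) * (b - a) < b powr \<alpha>"
proof -
  have "a powr \<alpha> * (1 + \<alpha> * (b/a - 1)) < a powr \<alpha> * (b/a) powr \<alpha>"
    using assms by (intro mult_strict_left_mono bernoulli_powr_strict) auto
  moreover have "a powr \<alpha> * (b/a) powr \<alpha> = b powr \<alpha>"
    using assms by (simp add: powr_divide)
  moreover have "a powr \<alpha> * (1 + \<alpha> * (b/a - 1)) = a powr \<alpha> + \<alpha> * a powr (\<alpha> - 1) * (b - a)"
    using assms by (simp add: powr_diff field_simps)
  ultimately show ?thesis by simp
qed

text \<open>At \<open>y = 0\<close> the junk value \<open>0 powr (\<alpha> - 2) = 0\<close> gives 0, which is the true gradient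
of \<open>\<parallel>y\<parallel>\<^sup>\<alpha>\<close> there since \<open>\<alpha> > 1\<close>.\<close>
definition norm_powr_grad :: "real \<Rightarrow> 'a::real_normed_vector \<Rightarrow> 'a" where
  "norm_powr_grad \<alpha> y = (\<alpha> * norm y powr (\<alpha> - 2)) *\<^sub>R y"

lemma norm_powr_gt_tangent:
  fixes y z :: "'a::real_inner"
  assumes "1 < \<alpha>" "z \<noteq> y"
  shows "norm y powr \<alpha> + inner (norm_powr_grad \<alpha> y) (z - y) < norm z powr \<alpha>"
proof (cases "y = 0")
  case True
  then show ?thesis using assms by (simp add: norm_powr_grad_def)
next
  case False
  define a b where "a = norm y" and "b = norm z"
  have a: "0 < a" using False by (simp add: a_def)
  have inner_eq: "inner (norm_powr_grad \<alpha> y) (z - y) = \<alpha> * a powr (\<alpha> - 2) * (inner y z - a\<^sup>2)"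
    by (simp add: norm_powr_grad_def a_def inner_diff_right power2_norm_eq_inner right_diff_distrib)
  show ?thesis
  proof (cases "b = a")
    case True
    have "0 < (norm (z - y))\<^sup>2" using assms by simp
    also have "(norm (z - y))\<^sup>2 = b\<^sup>2 - 2 * inner y z + a\<^sup>2"
      by (simp add: a_def b_def power2_norm_eq_inner inner_diff_left inner_diff_right inner_commute)
    finally have "inner y z - a\<^sup>2 < 0" using True by simp
    then have "\<alpha> * a powr (\<alpha> - 2) * (inner y z - a\<^sup>2) < 0"
      using a assms(1) by (simp add: mult_pos_neg)
    then show ?thesis using True inner_eq by (simp add: a_def b_def)
  next
    case False
    have "inner y z \<le> a * b" unfolding a_def b_def by (rule norm_cauchy_schwarz)
    then have "\<alpha> * a powr (\<alpha> - 2) * (inner y z - a\<^sup>2) \<le> \<alpha> * a powr (\<alpha> - 2) * (a * b - a\<^sup>2)"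
      using a assms(1) by (intro mult_left_mono) auto
    also have "\<dots> = \<alpha> * a powr (\<alpha> - 1) * (b - a)"
      using a by (simp add: powr_diff power2_eq_square field_simps)
    finally have "norm y powr \<alpha> + inner (norm_powr_grad \<alpha> y) (z - y)
        \<le> a powr \<alpha> + \<alpha> * a powr (\<alpha> - 1) * (b - a)"
      using inner_eq by (simp add: a_def)
    also have "\<dots> < b powr \<alpha>" using powr_gt_tangent[OF assms(1) a _ False] b_def by simp
    finally show ?thesis by (simp add: b_def)
  qed
qed

lemma norm_powr_ge_tangent:
  fixes y z :: "'a::real_inner"
  assumes "1 < \<alpha>"
  shows "norm y powr \<alpha> + inner (norm_powr_grad \<alpha> y) (z - y) \<le> norm z powr \<alpha>"
  using norm_powr_gt_tangent[OF assms, of z y] by (cases "z = y") auto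

lemma norm_powr_midpoint_strict:
  fixes y z :: "'a::real_inner"
  assumes "1 < \<alpha>" "y \<noteq> z"
  shows "2 * norm (midpoint y z) powr \<alpha> < norm y powr \<alpha> + norm z powr \<alpha>"
proof -
  have diff: "y - midpoint y z = (1/2) *\<^sub>R (y - z)" "z - midpoint y z = - (y - midpoint y z)"
    by (simp_all add: midpoint_def algebra_simps flip: scaleR_add_left)
  then have "y \<noteq> midpoint y z" "z \<noteq> midpoint y z"
    using assms(2) by auto
  moreover note diff(2)
  ultimately show ?thesis
    using norm_powr_gt_tangent[OF assms(1), of y "midpoint y z"]
      norm_powr_gt_tangent[OF assms(1), of z "midpoint y z"]
    by (simp add: inner_diff_right)
qed

lemma isCont_norm_powr_grad:
  assumes "1 < \<alpha>"
  shows "isCont (norm_powr_grad \<alpha>) y"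
proof (cases "y = 0")
  case False
  then show ?thesis unfolding isCont_def norm_powr_grad_def by (auto intro!: tendsto_intros)
next
  case True
  have norm_eq: "norm (norm_powr_grad \<alpha> z) = \<alpha> * norm z powr (\<alpha> - 1)" for z
    using assms by (cases "z = 0") (simp_all add: norm_powr_grad_def powr_diff power2_eq_square)
  have "((\<lambda>z. \<alpha> * norm z powr (\<alpha> - 1)) \<longlongrightarrow> 0) (at (0::'a))"
    using assms by (intro tendsto_mult_right_zero tendsto_zero_powrI tendsto_norm_zero
        tendsto_ident_at tendsto_const) auto
  then have "(norm_powr_grad \<alpha> \<longlongrightarrow> 0) (at (0::'a))"
    unfolding norm_eq[symmetric] by (rule tendsto_norm_zero_cancel)
  then show ?thesis using True by (simp add: isCont_def norm_powr_grad_def)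
qed

definition Pfun_branch :: "real \<Rightarrow> 'a::real_normed_vector set \<Rightarrow> 'a \<Rightarrow> 'a \<Rightarrow> real" where
  "Pfun_branch \<alpha> X j s = (\<Sum>x\<in>X. norm (s - x) powr \<alpha>) + norm (s - j) powr \<alpha>"

definition Pfun_branch_grad :: "real \<Rightarrow> 'a::real_normed_vector set \<Rightarrow> 'a \<Rightarrow> 'a \<Rightarrow> 'a" where
  "Pfun_branch_grad \<alpha> X j s = (\<Sum>x\<in>X. norm_powr_grad \<alpha> (s - x)) + norm_powr_grad \<alpha> (s - j)"

lemma Pfun_branch_le_Pfun:
  assumes "finite X" "j \<in> X"
  shows "Pfun_branch \<alpha> X j s \<le> Pfun \<alpha> X s"
  using assms by (simp add: Pfun_def Pfun_branch_def)

lemma Pfun_eq_branch: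
  assumes "finite X" "X \<noteq> {}"
  obtains j where "j \<in> X" "Pfun \<alpha> X s = Pfun_branch \<alpha> X j s"
proof -
  have "Max ((\<lambda>x. norm (s - x) powr \<alpha>) ` X) \<in> (\<lambda>x. norm (s - x) powr \<alpha>) ` X"
    using assms by (intro Max_in) auto
  then show ?thesis
    using that by (auto simp: Pfun_def Pfun_branch_def)
qed

lemma Pfun_eq_branch_equidistant:
  assumes "\<forall>x\<in>X. norm (c - x) = r" "j \<in> X"
  shows "Pfun \<alpha> X c = Pfun_branch \<alpha> X j c"
proof -
  have "(\<lambda>x. norm (c - x) powr \<alpha>) ` X = {r powr \<alpha>}" using assms by auto
  then show ?thesis using assms by (simp add: Pfun_def Pfun_branch_def)
qed

lemma Pfun_branch_ge_tangent:
  fixes s t :: "'a::real_inner"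
  assumes "1 < \<alpha>"
  shows "Pfun_branch \<alpha> X j s + inner (Pfun_branch_grad \<alpha> X j s) (t - s) \<le> Pfun_branch \<alpha> X j t"
proof -
  have tangent: "norm (s - x) powr \<alpha> + inner (norm_powr_grad \<alpha> (s - x)) (t - s) \<le> norm (t - x) powr \<alpha>" for x
    using norm_powr_ge_tangent[OF assms, of "s - x" "t - x"] by simp
  have "(\<Sum>x\<in>X. norm (s - x) powr \<alpha> + inner (norm_powr_grad \<alpha> (s - x)) (t - s))
      \<le> (\<Sum>x\<in>X. norm (t - x) powr \<alpha>)"
    by (intro sum_mono tangent)
  then show ?thesis using tangent[of j]
    by (simp add: Pfun_branch_def Pfun_branch_grad_def inner_add_left inner_sum_left sum.distrib)
qed

lemma Pfun_branch_midpoint_strict: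
  fixes s t :: "'a::real_inner"
  assumes "1 < \<alpha>" "s \<noteq> t"
  shows "2 * Pfun_branch \<alpha> X j (midpoint s t) < Pfun_branch \<alpha> X j s + Pfun_branch \<alpha> X j t"
proof -
  have mid: "midpoint s t - x = midpoint (s - x) (t - x)" for x
    by (simp add: midpoint_def algebra_simps flip: scaleR_add_left)
  have strict: "2 * norm (midpoint s t - x) powr \<alpha> < norm (s - x) powr \<alpha> + norm (t - x) powr \<alpha>" for x
    unfolding mid using assms by (intro norm_powr_midpoint_strict) auto
  have "(\<Sum>x\<in>X. 2 * norm (midpoint s t - x) powr \<alpha>) \<le> (\<Sum>x\<in>X. norm (s - x) powr \<alpha> + norm (t - x) powr \<alpha>)"
    using strict by (intro sum_mono less_imp_le)
  then show ?thesis using strict[of j]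
    by (simp add: Pfun_branch_def sum_distrib_left sum.distrib)
qed

lemma isCont_Pfun_branch_grad:
  assumes "1 < \<alpha>"
  shows "isCont (Pfun_branch_grad \<alpha> X j) s"
  unfolding Pfun_branch_grad_def
  by (intro continuous_intros isCont_o2[OF _ isCont_norm_powr_grad[OF assms]])

lemma M_pt_minus_eq:
  assumes "0 < \<alpha>" "finite X"
  shows "M_pt \<alpha> X j c - c = - (1 / (\<alpha> * (real (card X) + 1))) *\<^sub>R Pfun_branch_grad \<alpha> X j c"
proof -
  have xs: "xs_pt \<alpha> x c = c - (1 / \<alpha>) *\<^sub>R norm_powr_grad \<alpha> (c - x)" for x
    using assms(1) by (simp add: xs_pt_def norm_powr_grad_def algebra_simps)
  have "xs_pt \<alpha> j c + (\<Sum>x\<in>X. xs_pt \<alpha> x c)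
      = (real (card X) + 1) *\<^sub>R c - (1 / \<alpha>) *\<^sub>R Pfun_branch_grad \<alpha> X j c"
    unfolding xs Pfun_branch_grad_def
    by (simp add: sum_subtractf scaleR_sum_right sum_constant_scaleR algebra_simps del: sum_constant)
  moreover have "(1 / (real (card X) + 1)) * (real (card X) + 1) = 1"
    by (simp add: add_pos_nonneg)
  ultimately show ?thesis
    by (simp add: M_pt_def scaleR_diff_right)
qed

lemma continuous_on_Max_image:
  fixes f :: "'b \<Rightarrow> 'a::topological_space \<Rightarrow> real"
  assumes "finite X" "X \<noteq> {}" "\<And>x. x \<in> X \<Longrightarrow> continuous_on S (f x)"
  shows "continuous_on S (\<lambda>s. Max ((\<lambda>x. f x s) ` X))"
  using assms
proof (induction X rule: finite_ne_induct)
  case (insert x F)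
  then have "(\<lambda>s. Max ((\<lambda>x. f x s) ` insert x F)) = (\<lambda>s. max (f x s) (Max ((\<lambda>x. f x s) ` F)))"
    by auto
  then show ?case using insert by (auto intro!: continuous_on_max)
qed simp

lemma continuous_on_Pfun:
  assumes "1 < \<alpha>" "finite X" "X \<noteq> {}"
  shows "continuous_on UNIV (Pfun \<alpha> X)"
proof -
  have cont: "continuous_on UNIV (\<lambda>s. norm (s - x) powr \<alpha>)" for x :: "real^2"
    using assms(1) by (intro continuous_on_powr') (auto intro!: continuous_intros)
  then show ?thesis unfolding Pfun_def[abs_def]
    using assms(2,3) by (intro continuous_on_add continuous_on_sum continuous_on_Max_image) auto
qed

lemma Pfun_ge_norm_powr:
  assumes "finite X" "x \<in> X"
  shows "norm (s - x) powr \<alpha> \<le> Pfun \<alpha> X s"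
proof -
  have "norm (s - x) powr \<alpha> \<le> norm (s - x) powr \<alpha> + norm (s - x) powr \<alpha>" by simp
  also have "\<dots> \<le> Pfun_branch \<alpha> X x s"
    unfolding Pfun_branch_def using assms by (intro add_right_mono member_le_sum) auto
  also have "\<dots> \<le> Pfun \<alpha> X s" by (rule Pfun_branch_le_Pfun[OF assms])
  finally show ?thesis .
qed

lemma Pfun_has_minimiser:
  assumes "1 < \<alpha>" "finite X" "X \<noteq> {}"
  obtains s where "\<And>t. Pfun \<alpha> X s \<le> Pfun \<alpha> X t"
proof -
  obtain x where x: "x \<in> X" using assms by auto
  define R where "R = Pfun \<alpha> X x + 1"
  have R: "1 \<le> R" using Pfun_ge_norm_powr[OF assms(2) x, of x \<alpha>] by (simp add: R_def)
  have "continuous_on (cball x R) (Pfun \<alpha> X)"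
    using continuous_on_Pfun[OF assms] by (rule continuous_on_subset) simp
  then obtain s where s: "s \<in> cball x R" "\<And>t. t \<in> cball x R \<Longrightarrow> Pfun \<alpha> X s \<le> Pfun \<alpha> X t"
    using continuous_attains_inf[of "cball x R" "Pfun \<alpha> X"] R by fastforce
  have "Pfun \<alpha> X s \<le> Pfun \<alpha> X t" for t
  proof (cases "t \<in> cball x R")
    case False
    then have far: "R < norm (t - x)" by (simp add: dist_norm norm_minus_commute)
    have "Pfun \<alpha> X s \<le> Pfun \<alpha> X x" using s(2) R by simp
    also have "\<dots> < R powr 1" using R by (simp add: R_def)
    also have "\<dots> \<le> R powr \<alpha>" using R assms(1) by (intro powr_mono) auto
    also have "\<dots> < norm (t - x) powr \<alpha>" using far R assms(1) by (intro powr_less_mono2) auto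
    also have "\<dots> \<le> Pfun \<alpha> X t" by (rule Pfun_ge_norm_powr[OF assms(2) x])
    finally show ?thesis by (rule less_imp_le)
  qed (rule s(2))
  then show ?thesis using that by blast
qed

lemma Pfun_minimiser_unique:
  assumes "1 < \<alpha>" "finite X" "X \<noteq> {}"
    and "\<And>u. Pfun \<alpha> X s \<le> Pfun \<alpha> X u" "\<And>u. Pfun \<alpha> X t \<le> Pfun \<alpha> X u"
  shows "s = t"
proof (rule ccontr)
  assume "s \<noteq> t"
  obtain j where j: "j \<in> X" "Pfun \<alpha> X (midpoint s t) = Pfun_branch \<alpha> X j (midpoint s t)"
    using Pfun_eq_branch[OF assms(2,3)] by metis
  have "2 * Pfun \<alpha> X (midpoint s t) < Pfun_branch \<alpha> X j s + Pfun_branch \<alpha> X j t"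
    unfolding j(2) by (rule Pfun_branch_midpoint_strict[OF assms(1) \<open>s \<noteq> t\<close>])
  also have "\<dots> \<le> Pfun \<alpha> X s + Pfun \<alpha> X t"
    using Pfun_branch_le_Pfun[OF assms(2) j(1)] by (intro add_mono)
  also have "\<dots> \<le> 2 * Pfun \<alpha> X (midpoint s t)"
    using assms(4,5)[of "midpoint s t"] by simp
  finally show False by simp
qed

lemma s_star_eq_iff:
  assumes "1 < \<alpha>" "finite X" "X \<noteq> {}"
  shows "s_star \<alpha> X = c \<longleftrightarrow> (\<forall>t. Pfun \<alpha> X c \<le> Pfun \<alpha> X t)"
proof -
  have unique: "\<exists>!s. \<forall>t. Pfun \<alpha> X s \<le> Pfun \<alpha> X t"
    using Pfun_has_minimiser[OF assms] Pfun_minimiser_unique[OF assms] by metis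
  show ?thesis
    unfolding s_star_def
    using theI'[OF unique] the1_equality[OF unique, of c] by blast
qed

lemma notin_convex_hull_finite_iff:
  fixes S :: "'a::euclidean_space set"
  assumes "finite S"
  shows "c \<notin> convex hull S \<longleftrightarrow> (\<exists>d. \<forall>y\<in>S. 0 < inner d (y - c))"
proof
  assume "c \<notin> convex hull S"
  moreover have "closed (convex hull S)"
    using assms by (intro compact_imp_closed finite_imp_compact_convex_hull)
  ultimately obtain d b where "inner d c < b" "\<forall>y\<in>convex hull S. b < inner d y"
    using separating_hyperplane_closed_point[OF convex_convex_hull] by blast
  then have "\<forall>y\<in>S. 0 < inner d (y - c)"
    by (metis hull_inc inner_diff_right diff_gt_0_iff_gt less_trans)
  then show "\<exists>d. \<forall>y\<in>S. 0 < inner d (y - c)" ..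
next
  assume "\<exists>d. \<forall>y\<in>S. 0 < inner d (y - c)"
  then obtain d where "S \<subseteq> {y. inner d c < inner d y}"
    by (auto simp: inner_diff_right)
  then have "convex hull S \<subseteq> {y. inner d c < inner d y}"
    by (intro hull_minimal convex_halfspace_gt)
  then show "c \<notin> convex hull S" by auto
qed

lemma Pfun_branch_grad_inner_neg_if_less:
  assumes "1 < \<alpha>" "finite X" "\<forall>x\<in>X. norm (c - x) = r" "j \<in> X"
    and "Pfun \<alpha> X t < Pfun \<alpha> X c"
  shows "inner (Pfun_branch_grad \<alpha> X j c) (t - c) < 0"
proof -
  have "Pfun \<alpha> X c + inner (Pfun_branch_grad \<alpha> X j c) (t - c) \<le> Pfun_branch \<alpha> X j t"
    unfolding Pfun_eq_branch_equidistant[OF assms(3,4)] by (rule Pfun_branch_ge_tangent[OF assms(1)])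
  also have "\<dots> \<le> Pfun \<alpha> X t" by (rule Pfun_branch_le_Pfun[OF assms(2,4)])
  finally show ?thesis using assms(5) by linarith
qed

lemma Pfun_decreases_along_common_descent:
  assumes "1 < \<alpha>" "finite X" "X \<noteq> {}" "\<forall>x\<in>X. norm (c - x) = r"
    and descent: "\<forall>j\<in>X. inner (Pfun_branch_grad \<alpha> X j c) d < 0"
  shows "\<exists>t. Pfun \<alpha> X t < Pfun \<alpha> X c"
proof -
  have "\<forall>\<^sub>F e in at_right 0. inner (Pfun_branch_grad \<alpha> X j (c + e *\<^sub>R d)) d < 0" if "j \<in> X" for j
  proof (rule order_tendstoD(2))
    have "((\<lambda>e. c + e *\<^sub>R d) \<longlongrightarrow> c) (at_right (0::real))"
      by (auto intro!: tendsto_eq_intros)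
    then show "((\<lambda>e. inner (Pfun_branch_grad \<alpha> X j (c + e *\<^sub>R d)) d)
        \<longlongrightarrow> inner (Pfun_branch_grad \<alpha> X j c) d) (at_right 0)"
      by (intro tendsto_inner tendsto_const isCont_tendsto_compose[OF isCont_Pfun_branch_grad[OF assms(1)]])
  qed (use descent that in auto)
  then have "\<forall>\<^sub>F e in at_right 0. \<forall>j\<in>X. inner (Pfun_branch_grad \<alpha> X j (c + e *\<^sub>R d)) d < 0"
    using assms(2) by (simp add: eventually_ball_finite_distrib)
  then obtain b where "0 < b" and b: "\<And>e. 0 < e \<Longrightarrow> e < b \<Longrightarrow>
      \<forall>j\<in>X. inner (Pfun_branch_grad \<alpha> X j (c + e *\<^sub>R d)) d < 0"
    unfolding eventually_at_right_field by blast
  define e where "e = b / 2"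
  define t where "t = c + e *\<^sub>R d"
  have e: "0 < e" "\<forall>j\<in>X. inner (Pfun_branch_grad \<alpha> X j t) d < 0"
    using \<open>0 < b\<close> b[of e] by (simp_all add: e_def t_def)
  obtain j where j: "j \<in> X" "Pfun \<alpha> X t = Pfun_branch \<alpha> X j t"
    using Pfun_eq_branch[OF assms(2,3)] by metis
  have "inner (Pfun_branch_grad \<alpha> X j t) (c - t) = - e * inner (Pfun_branch_grad \<alpha> X j t) d"
    by (simp add: t_def)
  then have "0 < inner (Pfun_branch_grad \<alpha> X j t) (c - t)"
    using e j(1) by (simp add: mult_pos_neg)
  moreover have "Pfun_branch \<alpha> X j t + inner (Pfun_branch_grad \<alpha> X j t) (c - t) \<le> Pfun \<alpha> X c"
    unfolding Pfun_eq_branch_equidistant[OF assms(4) j(1)] by (rule Pfun_branch_ge_tangent[OF assms(1)])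
  ultimately show ?thesis using j(2) by (intro exI[of _ t]) linarith
qed

lemma equidistant_minimiser_iff_in_convex_hull:
  assumes "1 < \<alpha>" "finite X" "X \<noteq> {}" "\<forall>x\<in>X. norm (c - x) = r"
  shows "(\<forall>t. Pfun \<alpha> X c \<le> Pfun \<alpha> X t) \<longleftrightarrow> c \<in> convex hull ((\<lambda>x. M_pt \<alpha> X x c) ` X)"
proof -
  have pos_iff: "0 < inner d (M_pt \<alpha> X j c - c) \<longleftrightarrow> inner (Pfun_branch_grad \<alpha> X j c) d < 0" for d j
  proof -
    have "\<not> \<alpha> * (real (card X) + 1) < 0" using assms(1) by (simp add: not_less add_pos_nonneg)
    then show ?thesis
      using assms(1,2) by (simp add: M_pt_minus_eq inner_commute divide_less_0_iff)
  qed
  have "c \<notin> convex hull ((\<lambda>x. M_pt \<alpha> X x c) ` X)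
      \<longleftrightarrow> (\<exists>d. \<forall>j\<in>X. inner (Pfun_branch_grad \<alpha> X j c) d < 0)"
    using assms(2) by (simp add: notin_convex_hull_finite_iff pos_iff)
  then show ?thesis
    using Pfun_decreases_along_common_descent[OF assms] Pfun_branch_grad_inner_neg_if_less[OF assms(1,2,4)]
    by (metis not_le)
qed

theorem proposition5:
  fixes \<alpha> :: real and X :: "(real^2) set"
  assumes "\<alpha> > 1" and "finite X" and "X \<noteq> {}"
    and "\<exists>r. \<forall>x\<in>X. norm (one_centre X - x) = r"
  shows "s_star \<alpha> X = one_centre X \<longleftrightarrow>
         one_centre X \<in> convex hull ((\<lambda>x. M_pt \<alpha> X x (one_centre X)) ` X)"
proof -
  obtain r where "\<forall>x\<in>X. norm (one_centre X - x) = r" using assms(4) by blast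
  then show ?thesis
    using s_star_eq_iff[OF assms(1-3)] equidistant_minimiser_iff_in_convex_hull[OF assms(1-3)]
    by simp
qed

end
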